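(* Let $A$ (in $\mathcal H$) and $B$ (in $\mathcal K$) be closed densely defined operators such that $A\dashv B$ via a (possibly unbounded) intertwining operator $T_{AB}$ and $B\dashv A$ via a (possibly unbounded) intertwining operator $T_{BA}$, and assume that both $T_{AB}^{-1}$ and $T_{BA}^{-1}$ are everywhere defined and bounded. Then $\sigma_p(A)=\sigma_p(B)$, $\rho(A)=\rho(B)$, and hence $\sigma(A)=\sigma(B)$.
   Context: A closed densely defined operator $T:D(T)\subseteq\mathcal H\to\mathcal K$ is an intertwining operator for $A$ and $B$ if $D(A)\subseteq D(T)$ and $AD(A)\subseteq D(T)$, $TD(A)\subseteq D(B)$, and $BT\xi=TA\xi$ for all $\xi\in D(A)$. $A\dashv B$ means there is such an intertwining operator that is injective with densely defined inverse. $\rho(A)$ is the set of $\lambda$ with $A-\lambda I$ injective and $(A-\lambda I)^{-1}$ bounded everywhere defined; $\sigma(A)=\mathbb C\setminus\rho(A)$; $\sigma_p$ is the set of eigenvalues. *)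

theory Defs
  imports "HOL-Analysis.Analysis"
begin

text \<open>A complex Hilbert space is modelled as a real Hilbert space (complete real inner
  product space) together with a complex structure: an isometric real-linear map
  iunit (multiplication by the imaginary unit) with iunit (iunit x) = - x.
  The complex scalar multiplication is then c x = Re c x + Im c (iunit x), and the complex
  inner product is x \<bullet> y + i (x \<bullet> iunit y) (up to convention); the norm is the usual one.\<close>

class complex_hilbert = real_inner + complete_space +
  fixes iunit :: "'a \<Rightarrow> 'a"
  assumes iunit_add: "iunit (x + y) = iunit x + iunit y"
    and iunit_scaleR: "iunit (r *\<^sub>R x) = r *\<^sub>R iunit x"
    and iunit_iunit: "iunit (iunit x) = - x"
    and iunit_inner: "inner (iunit x) (iunit y) = inner x y"

definition scaleC :: "complex \<Rightarrow> 'a::complex_hilbert \<Rightarrow> 'a" (infixr "*\<^sub>C" 75) where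
  "c *\<^sub>C x = Re c *\<^sub>R x + Im c *\<^sub>R iunit x"

type_synonym ('a, 'b) lop = "'a set \<times> ('a \<Rightarrow> 'b)"

definition opdom :: "('a, 'b) lop \<Rightarrow> 'a set" where "opdom T = fst T"
definition opfun :: "('a, 'b) lop \<Rightarrow> 'a \<Rightarrow> 'b" where "opfun T = snd T"

definition csubspace :: "'a::complex_hilbert set \<Rightarrow> bool" where
  "csubspace S \<longleftrightarrow> 0 \<in> S \<and> (\<forall>x\<in>S. \<forall>y\<in>S. x + y \<in> S) \<and> (\<forall>c. \<forall>x\<in>S. c *\<^sub>C x \<in> S)"

definition linear_op :: "('a::complex_hilbert, 'b::complex_hilbert) lop \<Rightarrow> bool" where
  "linear_op T \<longleftrightarrow> csubspace (opdom T) \<and>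
     (\<forall>x\<in>opdom T. \<forall>y\<in>opdom T. opfun T (x + y) = opfun T x + opfun T y) \<and>
     (\<forall>c. \<forall>x\<in>opdom T. opfun T (c *\<^sub>C x) = c *\<^sub>C opfun T x)"

definition graph_op :: "('a, 'b) lop \<Rightarrow> ('a \<times> 'b) set" where
  "graph_op T = {(x, opfun T x) | x. x \<in> opdom T}"

definition closed_op :: "('a::complex_hilbert, 'b::complex_hilbert) lop \<Rightarrow> bool" where
  "closed_op T \<longleftrightarrow> linear_op T \<and> closed (graph_op T)"

definition densely_defined :: "('a::complex_hilbert, 'b) lop \<Rightarrow> bool" where
  "densely_defined T \<longleftrightarrow> closure (opdom T) = UNIV"

definition everywhere_defined :: "('a, 'b) lop \<Rightarrow> bool" where
  "everywhere_defined T \<longleftrightarrow> opdom T = UNIV"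

definition bounded_op :: "('a::complex_hilbert, 'b::complex_hilbert) lop \<Rightarrow> bool" where
  "bounded_op T \<longleftrightarrow> (\<exists>C. \<forall>x\<in>opdom T. norm (opfun T x) \<le> C * norm x)"

definition injective_op :: "('a, 'b) lop \<Rightarrow> bool" where
  "injective_op T \<longleftrightarrow> inj_on (opfun T) (opdom T)"

definition inverse_op :: "('a, 'b) lop \<Rightarrow> ('b, 'a) lop" where
  "inverse_op T = (opfun T ` opdom T, the_inv_into (opdom T) (opfun T))"

definition shift_op :: "('a::complex_hilbert, 'a) lop \<Rightarrow> complex \<Rightarrow> ('a, 'a) lop" where
  "shift_op A l = (opdom A, \<lambda>x. opfun A x - l *\<^sub>C x)"

definition intertwining :: "('a::complex_hilbert, 'b::complex_hilbert) lop \<Rightarrow>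
    ('a, 'a) lop \<Rightarrow> ('b, 'b) lop \<Rightarrow> bool" where
  "intertwining T A B \<longleftrightarrow>
     closed_op T \<and> densely_defined T \<and>
     opdom A \<subseteq> opdom T \<and> opfun A ` opdom A \<subseteq> opdom T \<and>
     opfun T ` opdom A \<subseteq> opdom B \<and>
     (\<forall>\<xi>\<in>opdom A. opfun B (opfun T \<xi>) = opfun T (opfun A \<xi>))"

text \<open>A \<stileturn> B via T: T is an injective intertwining operator with densely defined inverse.\<close>
definition quasi_sim_via :: "('a::complex_hilbert, 'a) lop \<Rightarrow> ('b::complex_hilbert, 'b) lop \<Rightarrow>
    ('a, 'b) lop \<Rightarrow> bool" where
  "quasi_sim_via A B T \<longleftrightarrow> intertwining T A B \<and> injective_op T \<and> densely_defined (inverse_op T)"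

definition quasi_sim :: "('a::complex_hilbert, 'a) lop \<Rightarrow> ('b::complex_hilbert, 'b) lop \<Rightarrow> bool" where
  "quasi_sim A B \<longleftrightarrow> (\<exists>T. quasi_sim_via A B T)"

definition resolvent_set :: "('a::complex_hilbert, 'a) lop \<Rightarrow> complex set" where
  "resolvent_set A = {l. injective_op (shift_op A l) \<and>
      everywhere_defined (inverse_op (shift_op A l)) \<and> bounded_op (inverse_op (shift_op A l))}"

definition spectrum_op :: "('a::complex_hilbert, 'a) lop \<Rightarrow> complex set" where
  "spectrum_op A = UNIV - resolvent_set A"

definition point_spectrum :: "('a::complex_hilbert, 'a) lop \<Rightarrow> complex set" where
  "point_spectrum A = {l. \<exists>x\<in>opdom A. x \<noteq> 0 \<and> opfun A x = l *\<^sub>C x}"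

end

theory Submission
  imports Defs
begin

text \<open>
  Eigenvectors are transported by an injective intertwining operator:
  if A x = l x with x \<noteq> 0 then B (T x) = T (A x) = l (T x) with T x \<noteq> 0.  Applying this
  to both quasi-similarities gives equality of the point spectra.

  For the resolvent sets let l be in the resolvent set of A.  Then l is not an eigenvalue
  of A, hence (by the first part) not of B, so B - l is injective.  B - l is surjective:
  every k is T h for some h (as the inverse of T is everywhere defined), h = (A - l) xi,
  and then (B - l) (T xi) = T ((A - l) xi) = k.  Finally B - l is a closed operator, so
  its everywhere defined inverse has a closed graph and is bounded by the closed graph
  theorem.  Symmetry then gives equal resolvent sets, hence equal spectra.
\<close>

lemma iunit_minus: "iunit (- x::'a::complex_hilbert) = - iunit x"
  using iunit_scaleR[of "-1" x] by simp

lemma iunit_diff: "iunit (x - y::'a::complex_hilbert) = iunit x - iunit y"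
  using iunit_add[of x "-y"] iunit_minus[of y] by simp

lemma iunit_norm: "norm (iunit x::'a::complex_hilbert) = norm x"
  by (simp add: norm_eq_sqrt_inner iunit_inner)

lemma bounded_linear_iunit: "bounded_linear (iunit :: 'a::complex_hilbert \<Rightarrow> 'a)"
  by (rule bounded_linear_intro[of _ 1]) (simp_all add: iunit_add iunit_scaleR iunit_norm)

lemma continuous_on_scaleC: "continuous_on UNIV (\<lambda>x::'a::complex_hilbert. c *\<^sub>C x)"
  unfolding scaleC_def by (intro continuous_intros linear_continuous_on bounded_linear_iunit)

lemma scaleC_add: "c *\<^sub>C (x + y) = c *\<^sub>C x + c *\<^sub>C (y::'a::complex_hilbert)"
  by (simp add: scaleC_def iunit_add algebra_simps)

lemma scaleC_diff: "c *\<^sub>C (x - y) = c *\<^sub>C x - c *\<^sub>C (y::'a::complex_hilbert)"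
  by (simp add: scaleC_def iunit_diff algebra_simps)

lemma scaleC_of_real: "complex_of_real r *\<^sub>C (x::'a::complex_hilbert) = r *\<^sub>R x"
  by (simp add: scaleC_def)

lemma scaleC_minus_one: "(-1) *\<^sub>C (x::'a::complex_hilbert) = - x"
  by (simp add: scaleC_def)

lemma scaleC_commute: "c *\<^sub>C (d *\<^sub>C x) = d *\<^sub>C (c *\<^sub>C (x::'a::complex_hilbert))"
  by (simp add: scaleC_def iunit_add iunit_scaleR iunit_iunit algebra_simps)

context
  fixes T :: "('a::complex_hilbert, 'b::complex_hilbert) lop"
  assumes lin: "linear_op T"
begin

lemma linear_op_add_mem: "x \<in> opdom T \<Longrightarrow> y \<in> opdom T \<Longrightarrow> x + y \<in> opdom T"
  using lin by (simp add: linear_op_def csubspace_def)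

lemma linear_op_scaleC_mem: "x \<in> opdom T \<Longrightarrow> c *\<^sub>C x \<in> opdom T"
  using lin by (simp add: linear_op_def csubspace_def)

lemma linear_op_zero_mem: "0 \<in> opdom T"
  using lin by (simp add: linear_op_def csubspace_def)

lemma linear_op_scaleR_mem: "x \<in> opdom T \<Longrightarrow> r *\<^sub>R x \<in> opdom T"
  using linear_op_scaleC_mem[of x "complex_of_real r"] by (simp add: scaleC_of_real)

lemma linear_op_diff_mem: "x \<in> opdom T \<Longrightarrow> y \<in> opdom T \<Longrightarrow> x - y \<in> opdom T"
  using linear_op_add_mem[of x "-y"] linear_op_scaleC_mem[of y "-1"]
  by (simp add: scaleC_minus_one)

lemma linear_op_add: "x \<in> opdom T \<Longrightarrow> y \<in> opdom T \<Longrightarrow> opfun T (x + y) = opfun T x + opfun T y"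
  using lin by (simp add: linear_op_def)

lemma linear_op_scaleC: "x \<in> opdom T \<Longrightarrow> opfun T (c *\<^sub>C x) = c *\<^sub>C opfun T x"
  using lin by (simp add: linear_op_def)

lemma linear_op_scaleR: "x \<in> opdom T \<Longrightarrow> opfun T (r *\<^sub>R x) = r *\<^sub>R opfun T x"
  using linear_op_scaleC[of x "complex_of_real r"] by (simp add: scaleC_of_real)

lemma linear_op_diff:
  "x \<in> opdom T \<Longrightarrow> y \<in> opdom T \<Longrightarrow> opfun T (x - y) = opfun T x - opfun T y"
  using linear_op_add[of x "-y"] linear_op_scaleC[of y "-1"] linear_op_scaleC_mem[of y "-1"]
  by (simp add: scaleC_minus_one)

lemma linear_op_zero: "opfun T 0 = 0"
  using linear_op_diff[OF linear_op_zero_mem linear_op_zero_mem] by simp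

lemma injective_op_nonzero:
  assumes "injective_op T" "x \<in> opdom T" "x \<noteq> 0"
  shows "opfun T x \<noteq> 0"
  using assms linear_op_zero linear_op_zero_mem
  by (auto simp: injective_op_def inj_on_def)

end

lemma opdom_shift_op [simp]: "opdom (shift_op A l) = opdom A"
  and opfun_shift_op [simp]: "opfun (shift_op A l) x = opfun A x - l *\<^sub>C x"
  by (simp_all add: shift_op_def opdom_def opfun_def)

lemma linear_shift_op:
  assumes "linear_op A"
  shows "linear_op (shift_op A l)"
  using assms linear_op_add[OF assms] linear_op_scaleC[OF assms]
  by (auto simp: linear_op_def shift_op_def opdom_def opfun_def scaleC_add scaleC_diff
      scaleC_commute[of l])

lemma closed_shift_op:
  fixes A :: "('a::complex_hilbert, 'a) lop"
  assumes "closed_op A"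
  shows "closed_op (shift_op A l)"
proof -
  have graph: "graph_op (shift_op A l) = (\<lambda>p. (fst p, snd p + l *\<^sub>C fst p)) -` graph_op A"
    by (auto simp: graph_op_def shift_op_def opdom_def opfun_def eq_diff_eq)
  have "continuous_on UNIV (\<lambda>p::'a \<times> 'a. (fst p, snd p + l *\<^sub>C fst p))"
    by (intro continuous_intros continuous_on_compose2[OF continuous_on_scaleC]) auto
  then have "closed (graph_op (shift_op A l))"
    unfolding graph using assms
    by (intro continuous_closed_vimage) (auto simp: closed_op_def continuous_on_eq_continuous_at)
  then show ?thesis
    using assms linear_shift_op[of A l] by (simp add: closed_op_def)
qed

lemma injective_shift_op_iff:
  assumes "linear_op A"
  shows "injective_op (shift_op A l) \<longleftrightarrow> l \<notin> point_spectrum A"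
proof
  assume "injective_op (shift_op A l)"
  then show "l \<notin> point_spectrum A"
    using injective_op_nonzero[OF linear_shift_op[OF assms]]
    by (auto simp: point_spectrum_def)
next
  assume eig: "l \<notin> point_spectrum A"
  show "injective_op (shift_op A l)"
    unfolding injective_op_def
  proof (rule inj_onI, rule ccontr)
    fix x y assume xy: "x \<in> opdom (shift_op A l)" "y \<in> opdom (shift_op A l)"
      and eq: "opfun (shift_op A l) x = opfun (shift_op A l) y" and "x \<noteq> y"
    have dom: "x \<in> opdom A" "y \<in> opdom A"
      using xy by simp_all
    have "opfun A x - opfun A y = l *\<^sub>C x - l *\<^sub>C y"
      using eq by (simp add: algebra_simps)
    then have "opfun A (x - y) = l *\<^sub>C (x - y)"
      using linear_op_diff[OF assms dom] by (simp add: scaleC_diff)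
    then have "l \<in> point_spectrum A"
      using linear_op_diff_mem[OF assms dom] \<open>x \<noteq> y\<close> unfolding point_spectrum_def
      by (intro CollectI bexI[of _ "x - y"]) auto
    with eig show False by simp
  qed
qed

section \<open>The closed graph theorem\<close>

text \<open>Baire step: for any map on a Banach space the closure of some sublevel set of its norm
  contains a ball, since these closures cover the space.\<close>

lemma sublevel_closure_contains_ball:
  fixes g :: "'a::banach \<Rightarrow> 'b::real_normed_vector"
  shows "\<exists>n x0 r. r > 0 \<and> ball x0 r \<subseteq> closure {x. norm (g x) \<le> real n}"
proof (rule ccontr)
  assume no_ball: "\<not> ?thesis"
  define F where "F n = closure {x. norm (g x) \<le> real n}" for n
  have "euclidean interior_of \<Union>(range F) = {}"
  proof (rule Baire_category_alt)
    show "completely_metrizable_space (euclidean :: 'a topology) \<or>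
        locally_compact_space (euclidean :: 'a topology) \<and> regular_space (euclidean :: 'a topology)"
      using completely_metrizable_space_euclidean by blast
    fix S assume "S \<in> range F"
    then obtain n where S: "S = F n" by auto
    have "interior S = {}"
      using no_ball unfolding S F_def by (metis equals0I mem_interior)
    then show "closedin euclidean S \<and> euclidean interior_of S = {}"
      by (simp add: S F_def)
  qed simp
  moreover have "\<Union>(range F) = UNIV"
  proof -
    have "x \<in> \<Union>(range F)" for x
    proof -
      obtain n where "norm (g x) \<le> real n" using real_arch_simple by auto
      then show ?thesis unfolding F_def by (meson closure_subset mem_Collect_eq subsetD UN_I UNIV_I)
    qed
    then show ?thesis by blast
  qed
  ultimately show False by simp
qed

text \<open>Subtracting two approximations, the ball can be moved to the origin
  (at the cost of doubling the bound).\<close>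

lemma linear_sublevel_closure_contains_origin_ball:
  fixes g :: "'a::banach \<Rightarrow> 'b::real_normed_vector"
  assumes lin: "linear g" and ball: "ball x0 r \<subseteq> closure {x. norm (g x) \<le> c}"
    and "norm z < r" "e > 0"
  shows "\<exists>w. norm (g w) \<le> 2 * c \<and> dist w z < e"
proof -
  have "r > 0" using assms(3) norm_ge_zero[of z] by linarith
  then have "x0 + z \<in> closure {x. norm (g x) \<le> c}" and "x0 \<in> closure {x. norm (g x) \<le> c}"
    using ball assms(3) by (auto simp: dist_norm)
  then obtain a b where a: "norm (g a) \<le> c" "dist a (x0 + z) < e/2"
    and b: "norm (g b) \<le> c" "dist b x0 < e/2"
    using \<open>e > 0\<close> unfolding closure_approachable by (metis half_gt_zero mem_Collect_eq)
  have "norm (g (a - b)) \<le> 2 * c"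
    using a b linear_diff[OF lin, of a b] norm_triangle_ineq4[of "g a" "g b"] by simp
  moreover have "dist (a - b) z = norm ((a - (x0 + z)) - (b - x0))"
    by (simp add: dist_norm algebra_simps)
  then have "dist (a - b) z < e"
    using a b norm_triangle_ineq4[of "a - (x0 + z)" "b - x0"] by (simp add: dist_norm)
  ultimately show ?thesis by blast
qed

text \<open>Rescaling: every vector x is approximated arbitrarily well by vectors x' with
  norm (g x') \<le> M * norm x, for one constant M.\<close>

lemma linear_approximately_bounded:
  fixes g :: "'a::banach \<Rightarrow> 'b::real_normed_vector"
  assumes lin: "linear g"
  shows "\<exists>M\<ge>0. \<forall>x e. e > 0 \<longrightarrow> (\<exists>x'. dist x x' < e \<and> norm (g x') \<le> M * norm x)"
proof -
  obtain n x0 r where r: "r > 0" and ball: "ball x0 r \<subseteq> closure {x. norm (g x) \<le> real n}"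
    using sublevel_closure_contains_ball by blast
  define M where "M = 4 * real n / r"
  have "\<exists>x'. dist x x' < e \<and> norm (g x') \<le> M * norm x" if "e > 0" for x e
  proof (cases "x = 0")
    case True
    then show ?thesis using that linear_0[OF lin] by (intro exI[of _ 0]) auto
  next
    case False
    define t where "t = r / (2 * norm x)"
    have t: "t > 0" and "norm (t *\<^sub>R x) < r" using r False by (simp_all add: t_def)
    then obtain w where w: "norm (g w) \<le> 2 * real n" "dist w (t *\<^sub>R x) < t * e"
      using linear_sublevel_closure_contains_origin_ball[OF lin ball, of "t *\<^sub>R x" "t * e"]
        \<open>e > 0\<close> by auto
    have "x - (1/t) *\<^sub>R w = (1/t) *\<^sub>R (t *\<^sub>R x - w)" using t by (simp add: algebra_simps)
    then have "dist x ((1/t) *\<^sub>R w) = (1/t) * dist w (t *\<^sub>R x)"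
      using t by (simp add: dist_norm norm_minus_commute)
    also have "\<dots> < e" using w t by (simp add: field_simps)
    finally have close: "dist x ((1/t) *\<^sub>R w) < e" .
    have "norm (g ((1/t) *\<^sub>R w)) = (1/t) * norm (g w)"
      using t linear_scale[OF lin] by simp
    also have "\<dots> \<le> (1/t) * (2 * real n)" using w t by (intro mult_left_mono) auto
    also have "\<dots> = M * norm x" using r False by (simp add: t_def M_def field_simps)
    finally show ?thesis using close by blast
  qed
  moreover have "M \<ge> 0" using r by (simp add: M_def)
  ultimately show ?thesis by blast
qed

text \<open>Successive approximation: approximating the remainder at each step writes x as a
  convergent series whose pieces d k have geometrically decreasing images.\<close>

lemma geometric_decomposition:
  fixes g :: "'a::real_normed_vector \<Rightarrow> 'b::real_normed_vector"
  assumes approx: "\<And>x e. e > 0 \<Longrightarrow> \<exists>x'. dist x x' < e \<and> norm (g x') \<le> M * norm x"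
    and "M \<ge> 0" and "x \<noteq> 0"
  shows "\<exists>d. (\<lambda>N. \<Sum>k<N. d k) \<longlonglongrightarrow> x \<and> (\<forall>k. norm (g (d k)) \<le> M * norm x * (1/2) ^ k)"
proof -
  define e where "e = norm x"
  have e: "e > 0" using \<open>x \<noteq> 0\<close> by (simp add: e_def)
  define c where "c k z = (SOME x'. dist z x' < e / 2 ^ Suc k \<and> norm (g x') \<le> M * norm z)"
    for k z
  have c: "dist z (c k z) < e / 2 ^ Suc k \<and> norm (g (c k z)) \<le> M * norm z" for k z
    unfolding c_def by (rule someI_ex, rule approx) (use e in simp)
  \<comment> \<open>rest k is the part of x not yet represented after k steps\<close>
  define rest where "rest = rec_nat x (\<lambda>k z. z - c k z)"
  have rest_0: "rest 0 = x" and rest_Suc: "rest (Suc k) = rest k - c k (rest k)" for k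
    by (simp_all add: rest_def)
  define d where "d k = c k (rest k)" for k
  have norm_rest: "norm (rest k) \<le> e / 2 ^ k" for k
  proof (induction k)
    case (Suc k)
    show ?case using c[of "rest k" k] by (simp add: rest_Suc dist_norm)
  qed (simp add: rest_0 e_def)
  have "norm (g (d k)) \<le> M * norm x * (1/2) ^ k" for k
  proof -
    have "norm (g (d k)) \<le> M * norm (rest k)" using c[of "rest k" k] by (simp add: d_def)
    also have "\<dots> \<le> M * (e / 2 ^ k)" using norm_rest[of k] \<open>M \<ge> 0\<close> by (rule mult_left_mono)
    finally show ?thesis by (simp add: e_def power_divide)
  qed
  moreover have "(\<lambda>N. \<Sum>k<N. d k) \<longlonglongrightarrow> x"
  proof -
    have partial: "(\<Sum>k<N. d k) = x - rest N" for N
      by (induction N) (simp_all add: rest_0 rest_Suc d_def)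
    have "(\<lambda>N. e / 2 ^ N) \<longlonglongrightarrow> 0"
      by (intro LIMSEQ_divide_realpow_zero) auto
    then have "rest \<longlonglongrightarrow> 0"
      by (rule Lim_null_comparison[rotated]) (use norm_rest in auto)
    then have "(\<lambda>N. x - rest N) \<longlonglongrightarrow> x - 0" by (intro tendsto_diff tendsto_const)
    then show ?thesis unfolding partial by simp
  qed
  ultimately show ?thesis by blast
qed

text \<open>The closed graph theorem: a linear map between Banach spaces with closed graph is
  bounded.  Apply g to the decomposition of x and pass to the limit in the graph.\<close>

lemma closed_graph_theorem:
  fixes g :: "'a::banach \<Rightarrow> 'b::banach"
  assumes lin: "linear g" and closed_graph: "closed (range (\<lambda>x. (x, g x)))"
  shows "\<exists>C. \<forall>x. norm (g x) \<le> C * norm x"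
proof -
  obtain M where "M \<ge> 0"
    and approx: "\<forall>x e. e > 0 \<longrightarrow> (\<exists>x'. dist x x' < e \<and> norm (g x') \<le> M * norm x)"
    using linear_approximately_bounded[OF lin] by auto
  have "norm (g x) \<le> (2 * M) * norm x" for x
  proof (cases "x = 0")
    case True
    then show ?thesis using linear_0[OF lin] by simp
  next
    case False
    then obtain d where sum_d: "(\<lambda>N. \<Sum>k<N. d k) \<longlonglongrightarrow> x"
      and bound: "\<And>k. norm (g (d k)) \<le> M * norm x * (1/2) ^ k"
      using geometric_decomposition[of g M x] approx \<open>M \<ge> 0\<close> by blast
    have geom: "summable (\<lambda>k. M * norm x * (1/2::real) ^ k)"
      by (intro summable_mult summable_geometric) simp
    then have "summable (\<lambda>k. g (d k))"
      by (rule summable_comparison_test') (rule bound)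
    then have "(\<lambda>N. g (\<Sum>k<N. d k)) \<longlonglongrightarrow> (\<Sum>k. g (d k))"
      by (simp add: linear_sum[OF lin] summable_LIMSEQ)
    with sum_d have "(\<lambda>N. ((\<Sum>k<N. d k), g (\<Sum>k<N. d k))) \<longlonglongrightarrow> (x, (\<Sum>k. g (d k)))"
      by (rule tendsto_Pair)
    then have "(x, (\<Sum>k. g (d k))) \<in> range (\<lambda>x. (x, g x))"
      by (rule closed_sequentially[OF closed_graph, rotated]) simp
    then have "g x = (\<Sum>k. g (d k))" by auto
    also have "norm \<dots> \<le> (\<Sum>k. M * norm x * (1/2::real) ^ k)"
      by (rule norm_suminf_le[OF bound geom])
    also have "\<dots> = (2 * M) * norm x"
      by (simp add: suminf_mult suminf_geometric)
    finally show ?thesis .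
  qed
  then show ?thesis by blast
qed

instance complex_hilbert \<subseteq> banach ..

lemma closed_op_inverse_bounded:
  fixes S :: "('a::complex_hilbert, 'b::complex_hilbert) lop"
  assumes closed: "closed_op S" and inj: "injective_op S" and onto: "opfun S ` opdom S = UNIV"
  shows "everywhere_defined (inverse_op S) \<and> bounded_op (inverse_op S)"
proof -
  have lin_S: "linear_op S" using closed by (simp add: closed_op_def)
  have inj_S: "inj_on (opfun S) (opdom S)" using inj by (simp add: injective_op_def)
  define g where "g = the_inv_into (opdom S) (opfun S)"
  have g_dom: "g y \<in> opdom S" and S_g: "opfun S (g y) = y" for y
    using the_inv_into_into[OF inj_S, of y "opdom S"] f_the_inv_into_f[OF inj_S, of y] onto
    by (auto simp: g_def)
  have g_eq: "g y = x" if "x \<in> opdom S" "opfun S x = y" for x y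
    using the_inv_into_f_eq[OF inj_S that(2) that(1)] by (simp add: g_def)
  have "linear g"
  proof (rule linearI)
    show "g (a + b) = g a + g b" for a b
      using linear_op_add[OF lin_S g_dom g_dom] linear_op_add_mem[OF lin_S g_dom g_dom]
      by (intro g_eq) (simp_all add: S_g)
    show "g (r *\<^sub>R a) = r *\<^sub>R g a" for r a
      using linear_op_scaleR[OF lin_S g_dom] linear_op_scaleR_mem[OF lin_S g_dom]
      by (intro g_eq) (simp_all add: S_g)
  qed
  moreover have "range (\<lambda>y. (y, g y)) = prod.swap -` graph_op S"
    using g_dom S_g g_eq by (force simp: graph_op_def)
  then have "closed (range (\<lambda>y. (y, g y)))"
    using closed by (auto simp: closed_op_def intro: continuous_closed_vimage continuous_intros)
  ultimately obtain C where "\<forall>y. norm (g y) \<le> C * norm y"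
    using closed_graph_theorem by blast
  then show ?thesis
    using onto by (auto simp: everywhere_defined_def bounded_op_def inverse_op_def
        opdom_def opfun_def g_def)
qed

lemma resolvent_setI:
  fixes A :: "('a::complex_hilbert, 'a) lop"
  assumes "closed_op A" "l \<notin> point_spectrum A"
    and "opfun (shift_op A l) ` opdom (shift_op A l) = UNIV"
  shows "l \<in> resolvent_set A"
  using assms closed_op_inverse_bounded[OF closed_shift_op[OF assms(1)]]
    injective_shift_op_iff[of A l]
  by (simp add: resolvent_set_def closed_op_def)

lemma resolvent_set_shift_onto:
  "l \<in> resolvent_set A \<Longrightarrow> opfun (shift_op A l) ` opdom (shift_op A l) = UNIV"
  by (simp add: resolvent_set_def everywhere_defined_def inverse_op_def opdom_def)

lemma resolvent_set_not_eigenvalue: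
  "linear_op A \<Longrightarrow> l \<in> resolvent_set A \<Longrightarrow> l \<notin> point_spectrum A"
  using injective_shift_op_iff[of A l] by (simp add: resolvent_set_def)

section \<open>Spectra of quasi-similar operators\<close>

text \<open>An injective intertwining operator maps eigenvectors of A to eigenvectors of B.\<close>

lemma point_spectrum_quasi_sim_subset:
  assumes "quasi_sim_via A B T"
  shows "point_spectrum A \<subseteq> point_spectrum B"
proof
  fix l assume "l \<in> point_spectrum A"
  then obtain x where x: "x \<in> opdom A" "x \<noteq> 0" "opfun A x = l *\<^sub>C x"
    by (auto simp: point_spectrum_def)
  have I: "intertwining T A B" and inj: "injective_op T"
    using assms by (auto simp: quasi_sim_via_def)
  have lin_T: "linear_op T" using I by (simp add: intertwining_def closed_op_def)
  have x_T: "x \<in> opdom T" and Tx_B: "opfun T x \<in> opdom B"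
    using I x by (auto simp: intertwining_def)
  have "opfun B (opfun T x) = opfun T (opfun A x)" using I x by (auto simp: intertwining_def)
  also have "\<dots> = l *\<^sub>C opfun T x" using x(3) linear_op_scaleC[OF lin_T x_T] by simp
  finally show "l \<in> point_spectrum B"
    using Tx_B injective_op_nonzero[OF lin_T inj x_T x(2)] by (auto simp: point_spectrum_def)
qed

text \<open>If T intertwines A and B and has full range, then surjectivity of A - l transfers to
  B - l, since (B - l) (T xi) = T ((A - l) xi).\<close>

lemma shift_onto_intertwining:
  assumes I: "intertwining T A B" and T_onto: "opfun T ` opdom T = UNIV"
    and A_onto: "opfun (shift_op A l) ` opdom (shift_op A l) = UNIV"
  shows "opfun (shift_op B l) ` opdom (shift_op B l) = UNIV"
proof -
  have lin_T: "linear_op T" using I by (simp add: intertwining_def closed_op_def)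
  have "k \<in> opfun (shift_op B l) ` opdom (shift_op B l)" for k
  proof -
    obtain h where h: "h \<in> opdom T" "opfun T h = k"
      using T_onto by (metis UNIV_I imageE)
    obtain xi where xi: "xi \<in> opdom A" "opfun A xi - l *\<^sub>C xi = h"
      using A_onto by (metis UNIV_I imageE opdom_shift_op opfun_shift_op)
    have xi_T: "xi \<in> opdom T" and Axi_T: "opfun A xi \<in> opdom T" and Txi_B: "opfun T xi \<in> opdom B"
      and comm: "opfun B (opfun T xi) = opfun T (opfun A xi)"
      using I xi(1) by (auto simp: intertwining_def)
    have "opfun B (opfun T xi) - l *\<^sub>C opfun T xi = opfun T (opfun A xi) - opfun T (l *\<^sub>C xi)"
      using comm linear_op_scaleC[OF lin_T xi_T] by simp
    also have "\<dots> = k"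
      using linear_op_diff[OF lin_T Axi_T linear_op_scaleC_mem[OF lin_T xi_T, of l], symmetric] xi h
      by simp
    finally show ?thesis
      using Txi_B by (auto intro!: image_eqI[of _ _ "opfun T xi"])
  qed
  then show ?thesis by blast
qed

lemma resolvent_set_quasi_sim_subset:
  fixes A :: "('a::complex_hilbert, 'a) lop" and B :: "('b::complex_hilbert, 'b) lop"
  assumes "closed_op A" "closed_op B" "quasi_sim_via A B T" "quasi_sim_via B A U"
    and "everywhere_defined (inverse_op T)"
  shows "resolvent_set A \<subseteq> resolvent_set B"
proof
  fix l assume l: "l \<in> resolvent_set A"
  have "l \<notin> point_spectrum B"
    using resolvent_set_not_eigenvalue[OF _ l] point_spectrum_quasi_sim_subset[OF assms(4)]
      assms(1) by (auto simp: closed_op_def)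
  moreover have "opfun (shift_op B l) ` opdom (shift_op B l) = UNIV"
    using assms(3,5) resolvent_set_shift_onto[OF l]
    by (intro shift_onto_intertwining[of T A B])
      (auto simp: quasi_sim_via_def everywhere_defined_def inverse_op_def opdom_def)
  ultimately show "l \<in> resolvent_set B"
    using resolvent_setI[OF assms(2)] by blast
qed

theorem proposition3p21:
  fixes A :: "('a::complex_hilbert, 'a) lop" and B :: "('b::complex_hilbert, 'b) lop"
    and T_AB :: "('a, 'b) lop" and T_BA :: "('b, 'a) lop"
  assumes "closed_op A" and "densely_defined A"
    and "closed_op B" and "densely_defined B"
    and "quasi_sim_via A B T_AB" and "quasi_sim_via B A T_BA"
    and "everywhere_defined (inverse_op T_AB)" and "bounded_op (inverse_op T_AB)"
    and "everywhere_defined (inverse_op T_BA)" and "bounded_op (inverse_op T_BA)"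
  shows "point_spectrum A = point_spectrum B \<and> resolvent_set A = resolvent_set B
    \<and> spectrum_op A = spectrum_op B"
proof -
  have "point_spectrum A = point_spectrum B"
    using point_spectrum_quasi_sim_subset[OF assms(5)] point_spectrum_quasi_sim_subset[OF assms(6)]
    by blast
  moreover have "resolvent_set A = resolvent_set B"
    using resolvent_set_quasi_sim_subset[OF assms(1,3,5,6,7)]
      resolvent_set_quasi_sim_subset[OF assms(3,1,6,5,9)] by blast
  ultimately show ?thesis by (simp add: spectrum_op_def)
qed

end
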